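(* Let $b_1^*\ge0$, $b_2^*\ge0$, $\sigma>0$, $\sigma_2^2=\sigma^2+(b_2^* )^2$, and for $b_1>0$ define $$b_1'(b_1)=\mathbb{E}_{\alpha\sim N(0,1),\,y\sim N(0,\sigma_2^2)}\Big[\tanh\Big(\frac{b_1\alpha}{\sigma^2}(y+\alpha b_1^* )\Big)(y+\alpha b_1^* )\,\alpha\Big]$$ with $\alpha,y$ independent. Then $b_1'$ is nondecreasing in $b_1$, and $$\lim_{b_1\to\infty}b_1'(b_1)=\frac2\pi\Big(b_1^*\tan^{-1}\Big(\frac{b_1^*}{\sigma_2}\Big)+\sigma_2\Big).$$
   Context: In the paper, $b_1'$ is the component of the population EM update $M(\beta)$ along $\beta/\|\beta\|$ when $b_1=\|\beta\|$, $b_1^*$ and $b_2^*$ are the components of $\beta^*$ along and orthogonal to $\beta$; the claim is stated directly in terms of the explicit expectation. *)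

theory Defs
  imports "HOL-Probability.Probability"
begin

text \<open>Joint law of independent alpha ~ N(0,1) and y ~ N(0, s2^2) (s2 = standard deviation).\<close>
definition em_joint :: "real \<Rightarrow> (real \<times> real) measure" where
  "em_joint s2 = density lborel std_normal_density \<Otimes>\<^sub>M density lborel (normal_density 0 s2)"

definition em_b1' :: "real \<Rightarrow> real \<Rightarrow> real \<Rightarrow> real \<Rightarrow> real" where
  "em_b1' \<sigma> b1s b2s b1 =
     (\<integral>(\<alpha>, y). tanh (b1 * \<alpha> / \<sigma>\<^sup>2 * (y + \<alpha> * b1s)) * (y + \<alpha> * b1s) * \<alpha>
        \<partial>em_joint (sqrt (\<sigma>\<^sup>2 + b2s\<^sup>2)))"

end

theory Submission
  imports Defs "HOL-Real_Asymp.Real_Asymp"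
begin

text \<open>With \<open>t = \<alpha> (y + \<alpha> b1s)\<close> the integrand is \<open>tanh (c t) t\<close> for \<open>c = b1 / \<sigma>\<^sup>2\<close>, which is
  nondecreasing in \<open>c \<ge> 0\<close>, bounded by \<open>\<bar>t\<bar>\<close> and tends to \<open>\<bar>t\<bar>\<close>; so \<open>b1'\<close> is monotone and, by
  dominated convergence, tends to \<open>E \<bar>t\<bar>\<close>. To compute \<open>E \<bar>t\<bar>\<close>, substitute \<open>y = \<alpha> u\<close>:
  integrating out \<open>\<alpha>\<close> (a third absolute Gaussian moment) leaves \<open>\<bar>u + b1s\<bar>\<close> integrated against
  the density \<open>2 \<sigma>2\<^sup>3 / (\<pi> (\<sigma>2\<^sup>2 + u\<^sup>2)\<^sup>2)\<close>, which has an elementary antiderivative.\<close>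

lemma tanh_mult_self_mono:
  fixes c c' t :: real
  assumes "0 \<le> c" "c \<le> c'"
  shows "tanh (c * t) * t \<le> tanh (c' * t) * t"
proof (cases "t \<ge> 0")
  case True
  then have "c * t \<le> c' * t" using assms by (intro mult_right_mono)
  then show ?thesis using True by (intro mult_right_mono) auto
next
  case False
  then have "c' * t \<le> c * t" using assms by (intro mult_right_mono_neg) auto
  then show ?thesis using False by (intro mult_right_mono_neg) auto
qed

lemma abs_tanh_mult_self_le: "\<bar>tanh (c * t) * t\<bar> \<le> \<bar>t :: real\<bar>"
  using tanh_real_bounds[of "c * t"] by (auto simp: abs_mult intro!: mult_left_le_one_le)

lemma tendsto_tanh_mult_self_at_top: "((\<lambda>c. tanh (c * t) * t) \<longlongrightarrow> \<bar>t :: real\<bar>) at_top"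
  by (cases t "0 :: real" rule: linorder_cases) (real_asymp, simp, real_asymp)

lemma borel_measurable_tanh [measurable]: "(tanh :: real \<Rightarrow> real) \<in> borel_measurable borel"
  by (intro borel_measurable_continuous_onI continuous_on_tanh continuous_on_id) simp

context
  fixes M :: "'a measure" and t :: "'a \<Rightarrow> real"
  assumes t_integrable: "integrable M t"
begin

lemma integrable_tanh_mult_self: "integrable M (\<lambda>x. tanh (c * t x) * t x)"
  by (rule Bochner_Integration.integrable_bound[OF t_integrable])
    (use t_integrable abs_tanh_mult_self_le in auto)

lemma mono_on_integral_tanh_mult_self: "mono_on {0..} (\<lambda>c. \<integral>x. tanh (c * t x) * t x \<partial>M)"
  by (auto intro!: mono_onI integral_mono integrable_tanh_mult_self tanh_mult_self_mono)

lemma tendsto_integral_tanh_mult_self: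
  "((\<lambda>c. \<integral>x. tanh (c * t x) * t x \<partial>M) \<longlongrightarrow> (\<integral>x. \<bar>t x\<bar> \<partial>M)) at_top"
  by (rule integral_dominated_convergence_at_top[where w = "\<lambda>x. \<bar>t x\<bar>"])
    (use t_integrable abs_tanh_mult_self_le tendsto_tanh_mult_self_at_top in auto)

end

lemma nn_integral_abs_cube_exp:
  fixes c :: real
  assumes c: "c > 0"
  shows "(\<integral>\<^sup>+x. ennreal (\<bar>x\<bar>^3 * exp (- c * x\<^sup>2 / 2)) \<partial>lborel) = ennreal (4 / c\<^sup>2)"
proof -
  define r where "r = 1 / sqrt c"
  have r: "r > 0" "r\<^sup>2 = 1 / c" using c by (auto simp: r_def power_divide)
  have "integrable lborel (\<lambda>x. std_normal_density x * \<bar>x\<bar>^3)"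
    and "(\<integral>x. std_normal_density x * \<bar>x\<bar>^3 \<partial>lborel) = 2 * sqrt (2/pi)"
    using std_normal_moment_abs_odd[of 1] by (auto simp: has_bochner_integral_iff)
  then have std_moment: "(\<integral>\<^sup>+x. ennreal (std_normal_density x * \<bar>x\<bar>^3) \<partial>lborel) = ennreal (2 * sqrt (2/pi))"
    by (subst nn_integral_eq_integral) auto
  have scale: "r * (\<bar>r * x\<bar>^3 * exp (- c * (r * x)\<^sup>2 / 2)) = r^4 * sqrt (2*pi) * (std_normal_density x * \<bar>x\<bar>^3)"
    for x
  proof -
    have exp_scaled: "exp (- c * (r * x)\<^sup>2 / 2) = exp (- x\<^sup>2 / 2)"
      using r c by (simp add: power_mult_distrib)
    have exp_std: "exp (- x\<^sup>2 / 2) = sqrt (2*pi) * std_normal_density x"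
      by (simp add: std_normal_density_def)
    have cube_scaled: "r * \<bar>r * x\<bar>^3 = r^4 * \<bar>x\<bar>^3"
      using r by (simp add: abs_mult power_mult_distrib power4_eq_xxxx power3_eq_cube)
    have "r * (\<bar>r * x\<bar>^3 * exp (- c * (r * x)\<^sup>2 / 2)) = (r * \<bar>r * x\<bar>^3) * exp (- c * (r * x)\<^sup>2 / 2)"
      by (simp only: mult.assoc)
    then show ?thesis
      by (simp only: exp_scaled exp_std cube_scaled mult_ac)
  qed
  have "(\<integral>\<^sup>+x. ennreal (\<bar>x\<bar>^3 * exp (- c * x\<^sup>2 / 2)) \<partial>lborel)
      = \<bar>r\<bar> * (\<integral>\<^sup>+x. ennreal (\<bar>0 + r * x\<bar>^3 * exp (- c * (0 + r * x)\<^sup>2 / 2)) \<partial>lborel)"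
    by (rule nn_integral_real_affine) (use r in auto)
  also have "\<dots> = (\<integral>\<^sup>+x. ennreal (r^4 * sqrt (2*pi)) * ennreal (std_normal_density x * \<bar>x\<bar>^3) \<partial>lborel)"
    using r scale by (subst nn_integral_cmult[symmetric]) (auto simp: ennreal_mult''[symmetric] simp del: ennreal_mult)
  also have "\<dots> = ennreal (r^4 * sqrt (2*pi) * (2 * sqrt (2/pi)))"
    using r by (subst nn_integral_cmult) (measurable, simp add: std_moment flip: ennreal_mult')
  also have "r^4 * sqrt (2*pi) * (2 * sqrt (2/pi)) = 4 / c\<^sup>2"
  proof -
    have "sqrt (2*pi) * sqrt (2/pi) = 2"
      by (simp add: real_sqrt_mult[symmetric])
    moreover have "r^4 = 1 / c\<^sup>2"
      using power_mult[of r 2 2] by (simp add: r(2) power_divide)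
    ultimately show ?thesis
      by simp
  qed
  finally show ?thesis .
qed

lemma std_normal_density_mult_normal_density:
  fixes s x u :: real
  assumes s: "s > 0"
  shows "std_normal_density x * normal_density 0 s (x * u) = exp (- ((s\<^sup>2 + u\<^sup>2) / s\<^sup>2) * x\<^sup>2 / 2) / (2 * pi * s)"
proof -
  have "sqrt (2*pi) * sqrt (2 * pi * s\<^sup>2) = sqrt ((2 * pi * s)\<^sup>2)"
    by (simp add: real_sqrt_mult[symmetric] power_mult_distrib power2_eq_square mult_ac)
  then have "sqrt (2*pi) * sqrt (2 * pi * s\<^sup>2) = 2 * pi * s"
    using s by simp
  moreover have "exp (- x\<^sup>2 / 2) * exp (- (x * u)\<^sup>2 / (2 * s\<^sup>2)) = exp (- ((s\<^sup>2 + u\<^sup>2) / s\<^sup>2) * x\<^sup>2 / 2)"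
    unfolding exp_add[symmetric] using s by (simp add: field_simps power_mult_distrib)
  ultimately show ?thesis
    by (simp add: std_normal_density_def normal_density_def)
qed

text \<open>The density of \<open>y / x\<close> when the law of \<open>(x, y)\<close> is reweighted by \<open>x\<^sup>2\<close>.\<close>

definition size_biased_ratio_density :: "real \<Rightarrow> real \<Rightarrow> real" where
  "size_biased_ratio_density s u = 2 * s^3 / (pi * (s\<^sup>2 + u\<^sup>2)\<^sup>2)"

lemma nn_integral_size_biased_ratio_density:
  fixes s u :: real
  assumes s: "s > 0"
  shows "(\<integral>\<^sup>+x. ennreal (\<bar>x\<bar>^3 * std_normal_density x * normal_density 0 s (x * u)) \<partial>lborel)
    = ennreal (size_biased_ratio_density s u)"
proof -
  define c where "c = (s\<^sup>2 + u\<^sup>2) / s\<^sup>2"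
  have c: "c > 0"
    using s by (simp add: c_def add_pos_nonneg)
  have "(\<integral>\<^sup>+x. ennreal (\<bar>x\<bar>^3 * std_normal_density x * normal_density 0 s (x * u)) \<partial>lborel)
      = (\<integral>\<^sup>+x. ennreal (1 / (2 * pi * s)) * ennreal (\<bar>x\<bar>^3 * exp (- c * x\<^sup>2 / 2)) \<partial>lborel)"
    using s by (intro nn_integral_cong)
      (simp add: std_normal_density_mult_normal_density c_def mult.assoc ennreal_mult''[symmetric] del: ennreal_mult)
  also have "\<dots> = ennreal (1 / (2 * pi * s)) * ennreal (4 / c\<^sup>2)"
    by (subst nn_integral_cmult) (measurable, simp only: nn_integral_abs_cube_exp[OF c])
  also have "\<dots> = ennreal (1 / (2 * pi * s) * (4 / c\<^sup>2))"
    using s by (simp flip: ennreal_mult')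
  also have "1 / (2 * pi * s) * (4 / c\<^sup>2) = size_biased_ratio_density s u"
    using s c by (simp add: c_def size_biased_ratio_density_def field_simps power2_eq_square power3_eq_cube)
  finally show ?thesis .
qed

lemma nn_integral_half_line_size_biased_ratio_density:
  fixes s b :: real
  assumes s: "s > 0"
  shows "(\<integral>\<^sup>+u. ennreal ((u + b) * size_biased_ratio_density s u) * indicator {-b..} u \<partial>lborel)
    = ennreal (b / 2 + (s + b * arctan (b / s)) / pi)"
proof -
  define F where "F u = (b * arctan (u / s) + s * (b * u - s\<^sup>2) / (s\<^sup>2 + u\<^sup>2)) / pi" for u
  have denom_pos: "s\<^sup>2 + u\<^sup>2 > 0" for u
    using s by (simp add: add_pos_nonneg)
  have "(F has_real_derivative (u + b) * size_biased_ratio_density s u) (at u)" for u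
  proof -
    have "(F has_real_derivative (inverse (1 + (u / s)\<^sup>2) * b / s
        + (b * s * (s\<^sup>2 + u\<^sup>2) - s * (b * u - s\<^sup>2) * (2 * u)) / (s\<^sup>2 + u\<^sup>2)\<^sup>2) / pi) (at u)"
      unfolding F_def using s denom_pos[of u] by (auto intro!: derivative_eq_intros simp: power2_eq_square)
    moreover have "inverse (1 + (u / s)\<^sup>2) * b / s = b * s / (s\<^sup>2 + u\<^sup>2)"
      using s denom_pos[of u] by (simp add: inverse_eq_divide power_divide divide_simps) (simp add: algebra_simps power2_eq_square)
    moreover have "(b * s / (s\<^sup>2 + u\<^sup>2)
        + (b * s * (s\<^sup>2 + u\<^sup>2) - s * (b * u - s\<^sup>2) * (2 * u)) / (s\<^sup>2 + u\<^sup>2)\<^sup>2) / pi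
        = (u + b) * size_biased_ratio_density s u"
      using s denom_pos[of u] unfolding size_biased_ratio_density_def
      by (simp add: divide_simps) (simp add: algebra_simps power2_eq_square power3_eq_cube)
    ultimately show ?thesis
      by simp
  qed
  moreover have "(F \<longlongrightarrow> b / 2) at_top"
    unfolding F_def using s by real_asymp
  ultimately have "(\<integral>\<^sup>+u. ennreal ((u + b) * size_biased_ratio_density s u) * indicator {-b..} u \<partial>lborel)
      = ennreal (b / 2 - F (-b))"
    using s by (intro nn_integral_FTC_atLeast) (auto simp: size_biased_ratio_density_def)
  also have "b / 2 - F (-b) = b / 2 + (s + b * arctan (b / s)) / pi"
    using denom_pos[of b] by (simp add: F_def arctan_minus divide_simps) (simp add: algebra_simps power2_eq_square)
  finally show ?thesis .
qed

lemma arctan_ge_pi_half_minus_inverse: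
  fixes x :: real
  assumes "x > 0"
  shows "pi / 2 - 1 / x \<le> arctan x"
  using arctan_inverse[of x] arctan_le_self[of "1 / x"] assms by (simp add: inverse_eq_divide)

lemma nn_integral_lborel_reflect:
  fixes f :: "real \<Rightarrow> ennreal"
  assumes [measurable]: "f \<in> borel_measurable borel"
  shows "(\<integral>\<^sup>+x. f (- x) \<partial>lborel) = (\<integral>\<^sup>+x. f x \<partial>lborel)"
  using nn_integral_distr[of uminus lborel borel f] by (simp add: lborel_distr_uminus)

lemma nn_integral_abs_shift_size_biased_ratio_density:
  fixes s b :: real
  assumes s: "s > 0"
  shows "(\<integral>\<^sup>+u. ennreal (\<bar>u + b\<bar> * size_biased_ratio_density s u) \<partial>lborel)
    = ennreal (2 / pi * (s + b * arctan (b / s)))"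
proof -
  define h where "h c v = ennreal ((v + c) * size_biased_ratio_density s v) * indicator {-c..} v" for c v
  have h_measurable [measurable]: "h c \<in> borel_measurable borel" for c
    unfolding h_def size_biased_ratio_density_def by measurable
  have half_line_nonneg: "0 \<le> c / 2 + (s + c * arctan (c / s)) / pi" for c
  proof (cases "c < 0")
    case True
    have "- c * (pi / 2 - 1 / (- c / s)) \<le> - c * arctan (- c / s)"
      using True s by (intro mult_left_mono arctan_ge_pi_half_minus_inverse) (auto simp: divide_neg_pos)
    then have "- c * pi / 2 \<le> s + c * arctan (c / s)"
      using True s by (simp add: arctan_minus algebra_simps)
    then show ?thesis
      by (simp add: field_simps)
  qed (use s in auto)
  \<comment> \<open>\<open>u \<mapsto> - u\<close> turns the part left of \<open>-b\<close> into the half-line integral for \<open>-b\<close>, the density being even.\<close>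
  have split: "ennreal (\<bar>u + b\<bar> * size_biased_ratio_density s u) = h b u + h (- b) (- u)" for u
    by (cases "u = - b") (auto simp: h_def size_biased_ratio_density_def indicator_def abs_if)
  have "(\<integral>\<^sup>+u. ennreal (\<bar>u + b\<bar> * size_biased_ratio_density s u) \<partial>lborel)
      = (\<integral>\<^sup>+u. h b u \<partial>lborel) + (\<integral>\<^sup>+u. h (- b) u \<partial>lborel)"
    by (simp add: split nn_integral_add nn_integral_lborel_reflect)
  also have "\<dots> = ennreal (b / 2 + (s + b * arctan (b / s)) / pi) + ennreal (- b / 2 + (s + b * arctan (b / s)) / pi)"
    using nn_integral_half_line_size_biased_ratio_density[OF s, of b]
      nn_integral_half_line_size_biased_ratio_density[OF s, of "- b"]
    by (simp add: h_def arctan_minus)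
  also have "\<dots> = ennreal (2 / pi * (s + b * arctan (b / s)))"
    using half_line_nonneg[of b] half_line_nonneg[of "- b"]
    by (simp add: arctan_minus flip: ennreal_plus)
  finally show ?thesis .
qed

lemma sets_em_joint [measurable_cong]: "sets (em_joint s) = sets (borel \<Otimes>\<^sub>M borel)"
  unfolding em_joint_def by (intro sets_pair_measure_cong) auto

lemma nn_integral_em_joint:
  fixes f :: "real \<times> real \<Rightarrow> ennreal"
  assumes s: "s > 0" and [measurable]: "f \<in> borel_measurable (borel \<Otimes>\<^sub>M borel)"
  shows "(\<integral>\<^sup>+z. f z \<partial>em_joint s)
    = (\<integral>\<^sup>+x. \<integral>\<^sup>+y. ennreal (std_normal_density x * normal_density 0 s y) * f (x, y) \<partial>lborel \<partial>lborel)"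
proof -
  interpret normal: prob_space "density lborel (normal_density 0 s)"
    using prob_space_normal_density[OF s] .
  have "em_joint s = density (lborel \<Otimes>\<^sub>M lborel) (\<lambda>(x, y). ennreal (std_normal_density x) * ennreal (normal_density 0 s y))"
    unfolding em_joint_def
    by (intro pair_measure_density) (auto intro: lborel.sigma_finite_measure_axioms normal.sigma_finite_measure_axioms)
  then show ?thesis
    by (simp add: nn_integral_density lborel.nn_integral_fst[symmetric] ennreal_mult split_beta')
qed

lemma nn_integral_em_joint_abs_shifted_product:
  fixes s b :: real
  assumes s: "s > 0"
  shows "(\<integral>\<^sup>+(x, y). ennreal \<bar>x * (y + x * b)\<bar> \<partial>em_joint s) = ennreal (2 / pi * (s + b * arctan (b / s)))"
proof -
  define g where "g x u = ennreal (\<bar>x\<bar>^3 * std_normal_density x * normal_density 0 s (x * u) * \<bar>u + b\<bar>)" for x u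
  have [measurable]: "case_prod g \<in> borel_measurable (lborel \<Otimes>\<^sub>M lborel)"
    unfolding g_def by measurable
  have substitute: "(\<integral>\<^sup>+y. ennreal (std_normal_density x * normal_density 0 s y) * ennreal \<bar>x * (y + x * b)\<bar> \<partial>lborel)
      = (\<integral>\<^sup>+u. g x u \<partial>lborel)" for x
  proof (cases "x = 0")
    case False
    have "(\<integral>\<^sup>+y. ennreal (std_normal_density x * normal_density 0 s y) * ennreal \<bar>x * (y + x * b)\<bar> \<partial>lborel)
        = \<bar>x\<bar> * (\<integral>\<^sup>+u. ennreal (std_normal_density x * normal_density 0 s (0 + x * u)) * ennreal \<bar>x * ((0 + x * u) + x * b)\<bar> \<partial>lborel)"
      using False by (intro nn_integral_real_affine) measurable
    also have "\<dots> = (\<integral>\<^sup>+u. g x u \<partial>lborel)"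
    proof (subst nn_integral_cmult[symmetric], measurable, intro nn_integral_cong)
      fix u
      have "\<bar>x * ((0 + x * u) + x * b)\<bar> = \<bar>x\<bar> * \<bar>x\<bar> * \<bar>u + b\<bar>"
        by (simp add: abs_mult distrib_left[symmetric])
      then show "ennreal \<bar>x\<bar> * (ennreal (std_normal_density x * normal_density 0 s (0 + x * u)) * ennreal \<bar>x * ((0 + x * u) + x * b)\<bar>) = g x u"
        by (simp add: g_def power3_eq_cube mult_ac flip: ennreal_mult')
    qed
    finally show ?thesis .
  qed (simp add: g_def)
  have "(\<integral>\<^sup>+(x, y). ennreal \<bar>x * (y + x * b)\<bar> \<partial>em_joint s) = (\<integral>\<^sup>+x. \<integral>\<^sup>+u. g x u \<partial>lborel \<partial>lborel)"
    using s by (simp add: nn_integral_em_joint substitute)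
  also have "\<dots> = (\<integral>\<^sup>+u. \<integral>\<^sup>+x. g x u \<partial>lborel \<partial>lborel)"
    by (rule lborel_pair.Fubini') measurable
  also have "\<dots> = (\<integral>\<^sup>+u. ennreal (\<bar>u + b\<bar> * size_biased_ratio_density s u) \<partial>lborel)"
  proof (intro nn_integral_cong)
    fix u
    have "(\<integral>\<^sup>+x. g x u \<partial>lborel)
        = (\<integral>\<^sup>+x. ennreal \<bar>u + b\<bar> * ennreal (\<bar>x\<bar>^3 * std_normal_density x * normal_density 0 s (x * u)) \<partial>lborel)"
      unfolding g_def by (intro nn_integral_cong) (simp add: mult.commute flip: ennreal_mult')
    also have "\<dots> = ennreal \<bar>u + b\<bar> * ennreal (size_biased_ratio_density s u)"
      by (subst nn_integral_cmult) (measurable, simp only: nn_integral_size_biased_ratio_density[OF s])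
    finally show "(\<integral>\<^sup>+x. g x u \<partial>lborel) = ennreal (\<bar>u + b\<bar> * size_biased_ratio_density s u)"
      by (simp add: ennreal_mult')
  qed
  also have "\<dots> = ennreal (2 / pi * (s + b * arctan (b / s)))"
    using nn_integral_abs_shift_size_biased_ratio_density[OF s] .
  finally show ?thesis .
qed

lemma
  fixes s b :: real
  assumes s: "s > 0"
  shows integrable_em_joint_shifted_product: "integrable (em_joint s) (\<lambda>(x, y). x * (y + x * b))"
    and integral_em_joint_abs_shifted_product:
      "(\<integral>(x, y). \<bar>x * (y + x * b)\<bar> \<partial>em_joint s) = 2 / pi * (s + b * arctan (b / s))"
proof -
  have "0 \<le> b * arctan (b / s)"
    using s by (cases "b \<ge> 0") (auto simp: zero_le_mult_iff divide_nonpos_pos)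
  then have value_nonneg: "0 \<le> 2 / pi * (s + b * arctan (b / s))"
    using s by simp
  have abs_integrable: "integrable (em_joint s) (\<lambda>(x, y). \<bar>x * (y + x * b)\<bar>)"
    using nn_integral_em_joint_abs_shifted_product[OF s, of b]
    by (intro integrableI_nonneg) (auto simp: case_prod_beta')
  then show "integrable (em_joint s) (\<lambda>(x, y). x * (y + x * b))"
    by (subst integrable_abs_iff[symmetric]) (auto simp: case_prod_beta')
  show "(\<integral>(x, y). \<bar>x * (y + x * b)\<bar> \<partial>em_joint s) = 2 / pi * (s + b * arctan (b / s))"
    using nn_integral_em_joint_abs_shifted_product[OF s, of b] value_nonneg
    by (subst integral_eq_nn_integral) (auto simp: case_prod_beta')
qed

theorem lemma11:
  fixes \<sigma> b1s b2s :: real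
  assumes "b1s \<ge> 0" and "b2s \<ge> 0" and "\<sigma> > 0"
  defines "\<sigma>2 \<equiv> sqrt (\<sigma>\<^sup>2 + b2s\<^sup>2)"
  shows "mono_on {0<..} (em_b1' \<sigma> b1s b2s) \<and>
     (em_b1' \<sigma> b1s b2s \<longlongrightarrow> 2 / pi * (b1s * arctan (b1s / \<sigma>2) + \<sigma>2)) at_top"
proof
  have \<sigma>2_pos: "\<sigma>2 > 0"
    unfolding \<sigma>2_def using \<open>\<sigma> > 0\<close> by (simp add: add_pos_nonneg)
  define t where "t = (\<lambda>(\<alpha>, y). \<alpha> * (y + \<alpha> * b1s))"
  define E where "E c = (\<integral>z. tanh (c * t z) * t z \<partial>em_joint \<sigma>2)" for c
  have t_integrable: "integrable (em_joint \<sigma>2) t"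
    unfolding t_def using \<sigma>2_pos by (rule integrable_em_joint_shifted_product)
  have b1': "em_b1' \<sigma> b1s b2s = (\<lambda>b1. E (b1 / \<sigma>\<^sup>2))"
    by (auto simp: em_b1'_def E_def t_def \<sigma>2_def case_prod_beta' mult_ac)
  show "mono_on {0<..} (em_b1' \<sigma> b1s b2s)"
    unfolding b1' E_def using \<open>\<sigma> > 0\<close>
    by (intro mono_onI mono_onD[OF mono_on_integral_tanh_mult_self[OF t_integrable]]) (auto intro: divide_right_mono)
  have "filterlim (\<lambda>b1. b1 / \<sigma>\<^sup>2) at_top at_top"
    using \<open>\<sigma> > 0\<close> by real_asymp
  from filterlim_compose[OF tendsto_integral_tanh_mult_self[OF t_integrable] this]
  show "(em_b1' \<sigma> b1s b2s \<longlongrightarrow> 2 / pi * (b1s * arctan (b1s / \<sigma>2) + \<sigma>2)) at_top"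
    using integral_em_joint_abs_shifted_product[OF \<sigma>2_pos, of b1s]
    by (simp add: b1' E_def t_def case_prod_beta' add.commute)
qed

end
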